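(* Let $k,l,m,n\in\mathbb{N}$ with $n,k\ge 2$ and $m,l\ge 3$. Then among the four ordered graphs $M_n$, $K_m$, $M^{RL}_k$, $M^{+}_l$, none is an induced ordered subgraph of another one of them. Moreover $\chi(M_n)=n+1$, $\chi(K_m)=m$, $\chi(M^{RL}_k)=2k$ and $\chi(M^{+}_l)=2l$.
   Context: An ordered graph is a triple $G=(V,E,\le_G)$ where $(V,E)$ is a finite simple undirected graph and $\le_G$ is a linear order on $V$. $H$ is an induced ordered subgraph of $G$ if there is an injective order-preserving map $V(H)\to V(G)$ such that two vertices are adjacent in $H$ iff their images are adjacent in $G$. $K_m$ is the complete graph on $m$ linearly ordered vertices. The ordered matching $M_n$ has vertices $a_1<b_1<\dots<a_n<b_n$ and edges $\{a_i,b_i\}$. $M^{RL}_n$ is $M_n$ together with all edges $\{b_i,a_j\}$, $i<j$; $M^{LR}_n$ is $M_n$ together with all edges $\{a_i,b_j\}$, $i<j$; $M^{+}_n=M^{LR}_n\cup M^{RL}_n$. The ordered chromatic number $\chi(G)$ is the minimum number of sets in a partition of $V$ into sets consecutive in $\le_G$ spanning no edge. *)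

theory Defs
  imports Main
begin

text \<open>An ordered graph is represented with vertex set {0..<nv G}, linearly ordered by the
natural order on nat, and a symmetric irreflexive adjacency predicate adj G (only its
values on vertices matter).\<close>

record ograph =
  nv :: nat
  adj :: "nat \<Rightarrow> nat \<Rightarrow> bool"

definition sym_edge :: "(nat \<Rightarrow> nat \<Rightarrow> bool) \<Rightarrow> nat \<Rightarrow> nat \<Rightarrow> bool" where
  "sym_edge P u v \<longleftrightarrow> u \<noteq> v \<and> P (min u v) (max u v)"

definition induced_osub :: "ograph \<Rightarrow> ograph \<Rightarrow> bool" where
  "induced_osub H G \<longleftrightarrow> (\<exists>f. strict_mono_on {..<nv H} f \<and> f ` {..<nv H} \<subseteq> {..<nv G} \<and>
     (\<forall>i<nv H. \<forall>j<nv H. adj H i j \<longleftrightarrow> adj G (f i) (f j)))"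

definition K :: "nat \<Rightarrow> ograph" where
  "K m = \<lparr>nv = m, adj = sym_edge (\<lambda>x y. y < m)\<rparr>"

text \<open>Matchings: a_i = 2i, b_i = 2i+1 for i = 0..n-1 (so a_0<b_0<a_1<...<b_{n-1}).\<close>
definition M :: "nat \<Rightarrow> ograph" where
  "M n = \<lparr>nv = 2*n, adj = sym_edge (\<lambda>x y. y < 2*n \<and> x div 2 = y div 2)\<rparr>"

text \<open>M^RL: M_n plus all edges {b_i, a_j}, i<j.\<close>
definition MRL :: "nat \<Rightarrow> ograph" where
  "MRL n = \<lparr>nv = 2*n, adj = sym_edge (\<lambda>x y. y < 2*n \<and>
      (x div 2 = y div 2 \<or> (odd x \<and> even y \<and> x div 2 < y div 2)))\<rparr>"

text \<open>M^LR: M_n plus all edges {a_i, b_j}, i<j.\<close>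
definition MLR :: "nat \<Rightarrow> ograph" where
  "MLR n = \<lparr>nv = 2*n, adj = sym_edge (\<lambda>x y. y < 2*n \<and>
      (x div 2 = y div 2 \<or> (even x \<and> odd y \<and> x div 2 < y div 2)))\<rparr>"

definition Mplus :: "nat \<Rightarrow> ograph" where
  "Mplus n = \<lparr>nv = 2*n, adj = (\<lambda>u v. adj (MLR n) u v \<or> adj (MRL n) u v)\<rparr>"

definition interval_colouring :: "ograph \<Rightarrow> nat set set \<Rightarrow> bool" where
  "interval_colouring G P \<longleftrightarrow>
     \<Union>P = {..<nv G} \<and> (\<forall>S\<in>P. S \<noteq> {}) \<and>
     (\<forall>S\<in>P. \<forall>T\<in>P. S \<noteq> T \<longrightarrow> S \<inter> T = {}) \<and>
     (\<forall>S\<in>P. \<forall>x\<in>S. \<forall>z\<in>S. \<forall>y. x \<le> y \<and> y \<le> z \<longrightarrow> y \<in> S) \<and>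
     (\<forall>S\<in>P. \<forall>x\<in>S. \<forall>y\<in>S. \<not> adj G x y)"

definition ochi :: "ograph \<Rightarrow> nat" where
  "ochi G = (LEAST c. \<exists>P. interval_colouring G P \<and> card P = c)"

end

theory Submission
  imports Defs
begin

text \<open>
  Each non-embedding is witnessed by a small configuration. \<open>K m\<close> has no non-edges,
  while the other three graphs are bipartite by the parity of positions and so contain no
  triangle. \<open>M n\<close> has no vertex with both an earlier and a later neighbour.
  In \<open>Mplus l\<close> non-adjacency is transitive (it is complete bipartite between even and odd
  positions), which fails in \<open>M n\<close> and \<open>MRL k\<close>. In \<open>MRL k\<close> an even vertex has at most one
  later neighbour and an odd vertex is adjacent to every later even vertex; this excludes
  \<open>M 2\<close> and \<open>Mplus 3\<close>.

  For the chromatic numbers: one block of an interval colouring cannot contain two vertices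
  that are both adjacent to their predecessor. This gives lower bounds that are matched by
  the obvious colourings.
\<close>

lemma nv_simps [simp]:
  "nv (M n) = 2 * n" "nv (K m) = m" "nv (MRL n) = 2 * n" "nv (Mplus n) = 2 * n"
  by (simp_all add: M_def K_def MRL_def Mplus_def)

lemma adj_K: "adj (K m) u v \<longleftrightarrow> u \<noteq> v \<and> u < m \<and> v < m"
  by (auto simp: K_def sym_edge_def min_def max_def)

lemma adj_M: "adj (M n) u v \<longleftrightarrow> u \<noteq> v \<and> u < 2 * n \<and> v < 2 * n \<and> u div 2 = v div 2"
  by (auto simp: M_def sym_edge_def min_def max_def)

lemma div_two_eq_iff: "(u::nat) < v \<Longrightarrow> u div 2 = v div 2 \<longleftrightarrow> even u \<and> v = u + 1"
  by presburger

lemma adj_M_less: "u < v \<Longrightarrow> adj (M n) u v \<longleftrightarrow> v < 2 * n \<and> even u \<and> v = u + 1"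
  by (auto simp: adj_M div_two_eq_iff)

lemma adj_MRL_less:
  assumes "u < v"
  shows "adj (MRL n) u v \<longleftrightarrow> v < 2 * n \<and> (v = u + 1 \<or> odd u \<and> even v)"
proof -
  have "odd u \<Longrightarrow> even v \<Longrightarrow> u div 2 < v div 2"
    using assms by presburger
  then show ?thesis
    using assms by (auto simp: MRL_def sym_edge_def div_two_eq_iff)
qed

lemma adj_MRL_parity: "u < v \<Longrightarrow> adj (MRL n) u v \<Longrightarrow> odd u \<noteq> odd v"
  by (auto simp: adj_MRL_less)

lemma adj_MRL_even_less: "even u \<Longrightarrow> u < v \<Longrightarrow> adj (MRL n) u v \<Longrightarrow> v = u + 1"
  by (auto simp: adj_MRL_less)

lemma not_adj_MRL_odd_less: "odd u \<Longrightarrow> u < v \<Longrightarrow> v < 2 * n \<Longrightarrow> \<not> adj (MRL n) u v \<Longrightarrow> odd v"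
  by (auto simp: adj_MRL_less)

lemma adj_MRL_commute: "adj (MRL n) u v \<longleftrightarrow> adj (MRL n) v u"
  by (auto simp: MRL_def sym_edge_def min_def max_def)

lemma not_adj_MRL_self: "\<not> adj (MRL n) u u"
  by (simp add: MRL_def sym_edge_def)

lemma adj_Mplus_less:
  assumes "u < v"
  shows "adj (Mplus n) u v \<longleftrightarrow> v < 2 * n \<and> odd u \<noteq> odd v"
proof -
  have "u div 2 = v div 2 \<Longrightarrow> odd u \<noteq> odd v"
    using assms by (simp add: div_two_eq_iff)
  moreover have "u div 2 \<noteq> v div 2 \<Longrightarrow> u div 2 < v div 2"
    using assms div_le_mono[of u v 2] by simp
  moreover have "v < 2 * n \<Longrightarrow> u < 2 * n"
    using assms by simp
  ultimately show ?thesis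
    unfolding Mplus_def MLR_def MRL_def sym_edge_def using assms by auto
qed

lemma adj_Mplus: "adj (Mplus n) u v \<longleftrightarrow> u < 2 * n \<and> v < 2 * n \<and> odd u \<noteq> odd v"
proof (cases u v rule: linorder_cases)
  case less
  then show ?thesis by (auto simp: adj_Mplus_less)
next
  case equal
  then show ?thesis by (simp add: Mplus_def MLR_def MRL_def sym_edge_def)
next
  case greater
  have "adj (Mplus n) u v \<longleftrightarrow> adj (Mplus n) v u"
    by (auto simp: Mplus_def MLR_def MRL_def sym_edge_def min_def max_def)
  then show ?thesis using greater by (auto simp: adj_Mplus_less)
qed

locale induced_embedding =
  fixes H G :: ograph and f :: "nat \<Rightarrow> nat"
  assumes mono: "i < j \<Longrightarrow> j < nv H \<Longrightarrow> f i < f j"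
    and range: "i < nv H \<Longrightarrow> f i < nv G"
    and adj_iff: "i < nv H \<Longrightarrow> j < nv H \<Longrightarrow> adj G (f i) (f j) \<longleftrightarrow> adj H i j"

lemma induced_osub_iff: "induced_osub H G \<longleftrightarrow> (\<exists>f. induced_embedding H G f)"
  unfolding induced_osub_def induced_embedding_def strict_mono_on_def image_subset_iff
  by (intro ex_cong1) (auto simp: eq_commute)

lemma not_induced_osub_K:
  assumes "i < j" "j < nv H" "\<not> adj H i j"
  shows "\<not> induced_osub H (K m)"
proof
  assume "induced_osub H (K m)"
  then obtain f where "induced_embedding H (K m) f" by (auto simp: induced_osub_iff)
  then interpret induced_embedding H "K m" f .
  have "f i < f j" "f j < m"
    using mono range assms by simp_all
  then have "adj (K m) (f i) (f j)"
    using range assms by (simp add: adj_K)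
  then show False using adj_iff assms by simp
qed

lemma K_not_induced_osub:
  fixes c :: "nat \<Rightarrow> bool"
  assumes "3 \<le> m" and two_colouring: "\<And>u v. u < v \<Longrightarrow> adj G u v \<Longrightarrow> c u \<noteq> c v"
  shows "\<not> induced_osub (K m) G"
proof
  assume "induced_osub (K m) G"
  then obtain f where "induced_embedding (K m) G f" by (auto simp: induced_osub_iff)
  then interpret induced_embedding "K m" G f .
  have "f 0 < f 1" "f 1 < f 2" "f 0 < f 2"
    using mono assms by simp_all
  moreover have "adj G (f 0) (f 1)" "adj G (f 1) (f 2)" "adj G (f 0) (f 2)"
    using adj_iff assms by (simp_all add: adj_K)
  ultimately have "c (f 0) \<noteq> c (f 1)" "c (f 1) \<noteq> c (f 2)" "c (f 0) \<noteq> c (f 2)"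
    using two_colouring by blast+
  then show False by auto
qed

lemma not_induced_osub_M:
  assumes "i < j" "j < k" "k < nv H" "adj H i j" "adj H j k"
  shows "\<not> induced_osub H (M n)"
proof
  assume "induced_osub H (M n)"
  then obtain f where "induced_embedding H (M n) f" by (auto simp: induced_osub_iff)
  then interpret induced_embedding H "M n" f .
  have "f i < f j" "f j < f k"
    using mono assms by simp_all
  moreover have "adj (M n) (f i) (f j)" "adj (M n) (f j) (f k)"
    using adj_iff assms by simp_all
  ultimately show False by (simp add: adj_M_less)
qed

lemma not_induced_osub_Mplus:
  assumes "i < nv H" "j < nv H" "k < nv H" "\<not> adj H i j" "\<not> adj H j k" "adj H i k"
  shows "\<not> induced_osub H (Mplus l)"
proof
  assume "induced_osub H (Mplus l)"
  then obtain f where "induced_embedding H (Mplus l) f" by (auto simp: induced_osub_iff)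
  then interpret induced_embedding H "Mplus l" f .
  have "f i < 2 * l" "f j < 2 * l" "f k < 2 * l"
    using range assms by simp_all
  moreover have "\<not> adj (Mplus l) (f i) (f j)" "\<not> adj (Mplus l) (f j) (f k)" "adj (Mplus l) (f i) (f k)"
    using adj_iff assms by simp_all
  ultimately show False by (simp add: adj_Mplus)
qed

lemma M_not_induced_osub_MRL:
  assumes "2 \<le> n"
  shows "\<not> induced_osub (M n) (MRL k)"
proof
  assume "induced_osub (M n) (MRL k)"
  then obtain f where "induced_embedding (M n) (MRL k) f" by (auto simp: induced_osub_iff)
  then interpret induced_embedding "M n" "MRL k" f .
  have "f 0 < f 1" "f 2 < f 3" "adj (MRL k) (f 0) (f 1)" "adj (MRL k) (f 2) (f 3)"
    using mono adj_iff assms by (simp_all add: adj_M_less)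
  \<comment> \<open>an odd endpoint of the first edge would force both ends of the second edge to be odd\<close>
  then have "odd (f 0) \<or> odd (f 1)" "odd (f 2) \<noteq> odd (f 3)"
    using adj_MRL_parity by blast+
  moreover have "odd (f y)" if "odd (f x)" "x \<in> {0, 1}" "y \<in> {2, 3}" for x y
  proof (rule not_adj_MRL_odd_less[OF \<open>odd (f x)\<close>])
    show "f x < f y" "f y < 2 * k" "\<not> adj (MRL k) (f x) (f y)"
      using that mono range adj_iff assms by (auto simp: adj_M_less)
  qed
  ultimately show False by blast
qed

lemma Mplus_not_induced_osub_MRL:
  assumes "3 \<le> l"
  shows "\<not> induced_osub (Mplus l) (MRL k)"
proof
  assume "induced_osub (Mplus l) (MRL k)"
  then obtain f where "induced_embedding (Mplus l) (MRL k) f" by (auto simp: induced_osub_iff)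
  then interpret induced_embedding "Mplus l" "MRL k" f .
  have less: "f 0 < f 1" "f 0 < f 3" "f 3 < f 5" "f 1 < f 2" "f 2 < f 4"
    using mono assms by simp_all
  have adj: "adj (MRL k) (f 0) (f 1)" "adj (MRL k) (f 0) (f 3)" "adj (MRL k) (f 0) (f 5)"
    "adj (MRL k) (f 1) (f 2)" "adj (MRL k) (f 1) (f 4)"
    using adj_iff assms by (simp_all add: adj_Mplus)
  have "even (f 0) \<or> even (f 1)"
    using adj_MRL_parity[OF less(1) adj(1)] by blast
  then show False
  proof
    assume "even (f 0)"
    then have "f 3 = f 0 + 1" "f 5 = f 0 + 1"
      using adj_MRL_even_less less adj by (meson less_trans)+
    then show False using less(3) by simp
  next
    assume "even (f 1)"
    then have "f 2 = f 1 + 1" "f 4 = f 1 + 1"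
      using adj_MRL_even_less less adj by (meson less_trans)+
    then show False using less(5) by simp
  qed
qed

lemma interval_colouring_from_mono:
  fixes G :: ograph and g :: "nat \<Rightarrow> 'a::order"
  assumes mono: "mono_on {..<nv G} g"
    and proper: "\<And>x y. x < nv G \<Longrightarrow> y < nv G \<Longrightarrow> adj G x y \<Longrightarrow> g x \<noteq> g y"
  obtains P where "interval_colouring G P" and "card P = card (g ` {..<nv G})"
proof
  let ?fibre = "\<lambda>a. {x. x < nv G \<and> g x = a}"
  have convex: "g y = g x" if "x < nv G" "z < nv G" "x \<le> y" "y \<le> z" "g x = g z" for x y z
    using mono_onD[OF mono, of x y] mono_onD[OF mono, of y z] that by auto
  show "interval_colouring G (?fibre ` g ` {..<nv G})"
    unfolding interval_colouring_def
  proof (intro conjI ballI allI impI)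
    show "\<Union> (?fibre ` g ` {..<nv G}) = {..<nv G}"
      by blast
  next
    fix S x z y
    assume "S \<in> ?fibre ` g ` {..<nv G}" "x \<in> S" "z \<in> S" "x \<le> y \<and> y \<le> z"
    then show "y \<in> S" using convex[of x z y] by auto
  qed (use proper in \<open>fastforce+\<close>)
  have "inj_on ?fibre (g ` {..<nv G})"
    by (rule inj_onI) blast
  then show "card (?fibre ` g ` {..<nv G}) = card (g ` {..<nv G})"
    by (rule card_image)
qed

text \<open>A block containing \<open>c < d\<close> would by convexity also contain \<open>d - 1\<close>, which is adjacent to \<open>d\<close>.\<close>

lemma card_le_card_interval_colouring:
  assumes P: "interval_colouring G P" and "C \<subseteq> {..<nv G}"
    and pred_adj: "\<And>c. c \<in> C \<Longrightarrow> 0 < c \<Longrightarrow> adj G (c - 1) c"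
  shows "card C \<le> card P"
proof -
  from P have cover: "\<Union>P = {..<nv G}"
    and convex: "\<And>S x z y. S \<in> P \<Longrightarrow> x \<in> S \<Longrightarrow> z \<in> S \<Longrightarrow> x \<le> y \<Longrightarrow> y \<le> z \<Longrightarrow> y \<in> S"
    and independent: "\<And>S x y. S \<in> P \<Longrightarrow> x \<in> S \<Longrightarrow> y \<in> S \<Longrightarrow> \<not> adj G x y"
    unfolding interval_colouring_def by (simp, meson, meson)
  define block where "block c = (SOME S. S \<in> P \<and> c \<in> S)" for c
  have block: "block c \<in> P \<and> c \<in> block c" if "c \<in> C" for c
  proof -
    have "\<exists>S. S \<in> P \<and> c \<in> S"
      using cover \<open>C \<subseteq> {..<nv G}\<close> that by blast
    then show ?thesis
      unfolding block_def by (rule someI_ex)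
  qed
  have "block c \<noteq> block d" if "c \<in> C" "d \<in> C" "c < d" for c d
  proof
    assume "block c = block d"
    then have "d - 1 \<in> block d"
      using convex[of "block d" c d "d - 1"] block[OF that(1)] block[OF that(2)] that by simp
    then show False
      using independent[of "block d" "d - 1" d] pred_adj[of d] block[OF that(2)] that by simp
  qed
  then have "inj_on block C"
    by (metis inj_onI linorder_neqE_nat)
  moreover have "finite P"
    using cover by (metis finite_UnionD finite_lessThan)
  ultimately show ?thesis
    using block by (intro card_inj_on_le) auto
qed

lemma ochi_eqI:
  assumes "interval_colouring G P" "card P = c" "\<And>Q. interval_colouring G Q \<Longrightarrow> c \<le> card Q"
  shows "ochi G = c"
  unfolding ochi_def by (rule Least_equality) (use assms in auto)

lemma ochi_eq_nv:
  assumes irrefl: "\<And>u. \<not> adj G u u"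
    and pred_adj: "\<And>c. 0 < c \<Longrightarrow> c < nv G \<Longrightarrow> adj G (c - 1) c"
  shows "ochi G = nv G"
proof -
  have "mono_on {..<nv G} id"
    by (simp add: mono_on_def)
  moreover have "x \<noteq> y" if "adj G x y" for x y
    using irrefl that by blast
  ultimately obtain P where "interval_colouring G P" "card P = nv G"
    by (metis card_lessThan id_apply image_id interval_colouring_from_mono)
  then show ?thesis
    by (rule ochi_eqI) (use card_le_card_interval_colouring[where C = "{..<nv G}"] pred_adj in auto)
qed

lemma ochi_K: "ochi (K m) = m"
  by (subst ochi_eq_nv) (auto simp: adj_K)

lemma ochi_MRL: "ochi (MRL n) = 2 * n"
  by (subst ochi_eq_nv) (simp_all add: not_adj_MRL_self adj_MRL_less)

lemma ochi_Mplus: "ochi (Mplus n) = 2 * n"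
  by (subst ochi_eq_nv) (simp_all add: adj_Mplus)

lemma ochi_M:
  assumes "1 \<le> n"
  shows "ochi (M n) = n + 1"
proof -
  \<comment> \<open>blocks \<open>{0}, {1, 2}, \<dots>, {2n - 3, 2n - 2}, {2n - 1}\<close>\<close>
  let ?g = "\<lambda>x::nat. (x + 1) div 2"
  have image: "?g ` {..<2 * n} = {..n}"
  proof (intro equalityI subsetI)
    fix j assume "j \<in> ?g ` {..<2 * n}"
    then show "j \<in> {..n}" by auto
  next
    fix j assume "j \<in> {..n}"
    then have "j = ?g (if j = 0 then 0 else 2 * j - 1)" "(if j = 0 then 0 else 2 * j - 1) < 2 * n"
      using assms by auto
    then show "j \<in> ?g ` {..<2 * n}" by blast
  qed
  have mono: "mono_on {..<nv (M n)} ?g"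
    by (auto simp: mono_on_def div_le_mono)
  have proper: "?g x \<noteq> ?g y" if "adj (M n) x y" for x y
  proof -
    have "?g u < ?g v" if "u < v" "adj (M n) u v" for u v
      using that by (auto simp: adj_M_less elim: evenE)
    moreover have "adj (M n) y x" "x \<noteq> y"
      using \<open>adj (M n) x y\<close> by (auto simp: adj_M)
    ultimately show ?thesis
      using \<open>adj (M n) x y\<close> by (metis linorder_neqE_nat less_irrefl)
  qed
  obtain P where "interval_colouring (M n) P" "card P = card (?g ` {..<nv (M n)})"
    by (rule interval_colouring_from_mono[of "M n" ?g]) (use mono proper in blast)+
  then have "interval_colouring (M n) P" "card P = n + 1"
    using image by simp_all
  then show ?thesis
  proof (rule ochi_eqI)
    fix Q assume Q: "interval_colouring (M n) Q"
    let ?C = "insert 0 ((\<lambda>i. 2 * i + 1) ` {..<n})"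
    have "card ?C = n + 1"
      by (subst card_insert_disjoint) (auto simp: card_image inj_on_def)
    moreover have "card ?C \<le> card Q"
      by (rule card_le_card_interval_colouring[OF Q]) (use assms in \<open>auto simp: adj_M_less\<close>)
    ultimately show "n + 1 \<le> card Q" by simp
  qed
qed

theorem proposition2:
  fixes k l m n :: nat
  assumes "n \<ge> 2" "k \<ge> 2" "m \<ge> 3" "l \<ge> 3"
  shows "(\<forall>i<4. \<forall>j<4. i \<noteq> j \<longrightarrow>
            \<not> induced_osub ([M n, K m, MRL k, Mplus l] ! i) ([M n, K m, MRL k, Mplus l] ! j))
       \<and> ochi (M n) = n + 1 \<and> ochi (K m) = m \<and> ochi (MRL k) = 2 * k \<and> ochi (Mplus l) = 2 * l"
proof -
  have "\<not> induced_osub (M n) (K m)" "\<not> induced_osub (MRL k) (K m)" "\<not> induced_osub (Mplus l) (K m)"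
    by (rule not_induced_osub_K[of 0 2]; use assms in \<open>simp add: adj_M_less adj_MRL_less adj_Mplus_less\<close>)+
  moreover have "\<not> induced_osub (K m) (M n)" "\<not> induced_osub (K m) (MRL k)" "\<not> induced_osub (K m) (Mplus l)"
    by (rule K_not_induced_osub[where c = odd]; use assms in \<open>auto simp: adj_M_less adj_Mplus_less dest: adj_MRL_parity\<close>)+
  moreover have "\<not> induced_osub (MRL k) (M n)" "\<not> induced_osub (Mplus l) (M n)"
    by (rule not_induced_osub_M[of 0 1 2]; use assms in \<open>simp add: adj_MRL_less adj_Mplus_less\<close>)+
  moreover have "\<not> induced_osub (M n) (Mplus l)" "\<not> induced_osub (MRL k) (Mplus l)"
    using assms not_induced_osub_Mplus[of 0 "M n" 2 1 l] not_induced_osub_Mplus[of 0 "MRL k" 3 1 l]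
    by (simp_all add: adj_M adj_MRL_less adj_MRL_commute[of k 3])
  moreover have "\<not> induced_osub (M n) (MRL k)" "\<not> induced_osub (Mplus l) (MRL k)"
    using assms by (simp_all add: M_not_induced_osub_MRL Mplus_not_induced_osub_MRL)
  ultimately show ?thesis
    using assms by (simp add: All_less_Suc numeral_eq_Suc ochi_M ochi_K ochi_MRL ochi_Mplus)
qed

end
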